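(* Let $d\ge 2$. For each rank-one projector $\Pi$ on $\mathbb{C}^d$ define the map $\Phi_\Pi:{\cal L}(\mathbb{C}^d)\to{\cal L}(\mathbb{C}^d)$ by $\Phi_\Pi(X)=\Pi X\Pi$, and let $\Phi(X)=\frac{1}{d(d+1)}\big(({\rm tr}\,X)I+X\big)$. Suppose $\Phi=\sum_{i=1}^{n}\pi_i\Phi_{\Pi_i}$ for some $n\le d^2$, rank-one projectors $\Pi_1,\dots,\Pi_n$, and weights $\pi_i>0$ with $\sum_i\pi_i=1$. Then $n=d^2$, $\pi_i=\frac{1}{d^2}$ for all $i$, and ${\rm tr}(\Pi_i\Pi_j)=\frac{1}{d+1}$ for all $i\ne j$; that is, the $\Pi_i$ with weights $1/d^2$ form a SIC ensemble.
   Context: ${\cal L}(\mathbb{C}^d)$ is the space of linear operators on $\mathbb{C}^d$; $I$ is the identity. *)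

theory Defs
  imports "HOL-Analysis.Analysis"
begin

text \<open>Operators on C^d are represented as d x d complex matrices, with d = CARD('d).\<close>

definition adjoint_mat :: "complex^'d^'d \<Rightarrow> complex^'d^'d" where
  "adjoint_mat A = (\<chi> i j. cnj (A $ j $ i))"

definition rank_one_projector :: "complex^'d^'d \<Rightarrow> bool" where
  "rank_one_projector P \<longleftrightarrow> adjoint_mat P = P \<and> P ** P = P \<and> rank P = 1"

definition Phi_proj :: "complex^'d^'d \<Rightarrow> complex^'d^'d \<Rightarrow> complex^'d^'d" where
  "Phi_proj P X = P ** X ** P"

definition Phi :: "complex^'d^'d \<Rightarrow> complex^'d^'d" where
  "Phi X = (1 / (real CARD('d) * (real CARD('d) + 1))) *\<^sub>R (mat (trace X) + X)"

end

theory Submission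
  imports Defs
begin

text \<open>Pairing the decomposition with \<open>P\<^sub>j\<close> under the trace and using \<open>P X P = tr(P X) P\<close> for a
  rank-one projector, the inputs \<open>X = I\<close> and \<open>X = P\<^sub>j\<close> give the first two moments of the real
  numbers \<open>g\<^sub>i = tr(P\<^sub>j P\<^sub>i)\<close> under the weights: \<open>\<Sum> w\<^sub>i g\<^sub>i = 1/d\<close> and
  \<open>\<Sum> w\<^sub>i g\<^sub>i\<^sup>2 = 2/(d(d+1))\<close>. Hence \<open>\<Sum> w\<^sub>i (g\<^sub>i - 1/(d+1))\<^sup>2 = 1/(d+1)\<^sup>2\<close>, and as \<open>g\<^sub>j = 1\<close>
  the term \<open>i = j\<close> alone forces \<open>w\<^sub>j \<le> 1/d\<^sup>2\<close>. Summing over \<open>j\<close> with \<open>n \<le> d\<^sup>2\<close> turns all these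
  inequalities into equalities: \<open>n = d\<^sup>2\<close>, \<open>w\<^sub>j = 1/d\<^sup>2\<close>, and every other term of the variance
  vanishes, i.e. \<open>g\<^sub>i = 1/(d+1)\<close> for \<open>i \<noteq> j\<close>.\<close>

(* The library's rank_0 covers real matrices only. *)
lemma rank_zero_matrix: "rank (0 :: 'a::field^'n^'m) = 0"
proof -
  have "rows (0 :: 'a^'n^'m) = {0}"
    by (auto simp: rows_def row_def zero_vec_def)
  then show ?thesis
    by (simp add: row_rank_def_gen)
qed

lemma rank_one_outer_product:
  fixes A :: "'a::field^'n^'m"
  assumes "rank A = 1"
  obtains a u where "\<And>i j. A$i$j = a$i * u$j"
proof -
  obtain B where B: "B \<subseteq> rows A" "vec.independent B" "rows A \<subseteq> vec.span B"
      "card B = vec.dim (rows A)"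
    using vec.basis_exists by blast
  then have "card B = 1"
    using assms by (simp add: row_rank_def_gen)
  then obtain u where u: "B = {u}"
    by (rule card_1_singletonE)
  have "\<exists>k. row i A = k *s u" for i
  proof -
    have "row i A \<in> vec.span {u}"
      using B u by (auto simp: rows_def)
    then show ?thesis
      by (auto simp: vec.span_singleton)
  qed
  then obtain k where "\<And>i. row i A = k i *s u"
    by metis
  then have "A$i$j = (\<chi> i. k i)$i * u$j" for i j
    by (metis row_def vec_lambda_beta vector_smult_component)
  then show thesis
    by (rule that)
qed

lemma outer_product_sandwich:
  fixes A X :: "'a::comm_semiring_1^'n^'n"
  assumes "\<And>i j. A$i$j = a$i * u$j"
  shows "A ** X ** A = (\<chi> i j. trace (A ** X) * A$i$j)"
proof -
  have "(A ** X ** A)$i$j = trace (A ** X) * A$i$j" for i j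
  proof -
    have "(A ** X ** A)$i$j = (\<Sum>l\<in>UNIV. \<Sum>k\<in>UNIV. u$k * X$k$l * a$l) * (a$i * u$j)"
      by (simp add: matrix_matrix_mult_def assms sum_distrib_left sum_distrib_right mult_ac)
    also have "(\<Sum>l\<in>UNIV. \<Sum>k\<in>UNIV. u$k * X$k$l * a$l) = trace (A ** X)"
      by (simp add: trace_def matrix_matrix_mult_def assms sum_distrib_left mult_ac)
    finally show ?thesis
      by (simp add: assms)
  qed
  then show ?thesis
    by (simp add: vec_eq_iff)
qed

lemma trace_mult_scale_right:
  fixes A B :: "'a::comm_semiring_1^'n^'n"
  shows "trace (A ** (\<chi> i j. t * B$i$j)) = t * trace (A ** B)"
  by (simp add: trace_def matrix_matrix_mult_def sum_distrib_left mult_ac)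

lemma trace_scaleR: "trace (r *\<^sub>R A) = r *\<^sub>R trace (A :: 'a::real_algebra_1^'n^'n)"
  by (simp add: trace_def scaleR_sum_right)

lemma trace_mult_sum_scaleR:
  fixes A :: "'a::{real_algebra_1, comm_ring_1}^'n^'n"
  shows "trace (A ** (\<Sum>i\<in>S. w i *\<^sub>R M i)) = (\<Sum>i\<in>S. w i *\<^sub>R trace (A ** M i))"
proof (induction S rule: infinite_finite_induct)
  case (insert x F)
  then show ?case
    by (simp add: matrix_add_ldistrib trace_add matrix_scalar_ac scalar_matrix_assoc[symmetric] trace_scaleR)
qed (simp_all add: trace_def)

lemma trace_rank_one_idempotent:
  fixes A :: "'a::field^'n^'n"
  assumes "rank A = 1" and "A ** A = A"
  shows "trace A = 1"
proof -
  obtain a u where "\<And>i j. A$i$j = a$i * u$j"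
    using rank_one_outer_product[OF assms(1)] by blast
  note sandwich = outer_product_sandwich[OF this, of "mat 1"]
  have entry: "A$i$j = trace A * A$i$j" for i j
  proof -
    have "A$i$j = (A ** mat 1 ** A)$i$j"
      using assms(2) by simp
    also have "\<dots> = trace A * A$i$j"
      unfolding sandwich by simp
    finally show ?thesis .
  qed
  have "A \<noteq> 0"
    using assms(1) by (auto simp: rank_zero_matrix)
  then obtain i j where "A$i$j \<noteq> 0"
    by (auto simp: vec_eq_iff)
  with entry[of i j] show ?thesis
    by simp
qed

lemma rank_one_projector_sandwich:
  assumes "rank_one_projector P"
  shows "Phi_proj P X = (\<chi> i j. trace (P ** X) * P$i$j)"
proof -
  obtain a u where "\<And>i j. P$i$j = a$i * u$j"
    using assms rank_one_outer_product unfolding rank_one_projector_def by blast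
  then show ?thesis
    unfolding Phi_proj_def by (rule outer_product_sandwich)
qed

lemma trace_rank_one_projector: "rank_one_projector P \<Longrightarrow> trace P = 1"
  unfolding rank_one_projector_def by (blast intro: trace_rank_one_idempotent)

lemma adjoint_mat_mult: "adjoint_mat (A ** B) = adjoint_mat B ** adjoint_mat A"
  by (simp add: adjoint_mat_def matrix_matrix_mult_def vec_eq_iff mult.commute)

lemma trace_adjoint_mat: "trace (adjoint_mat A) = cnj (trace A)"
  by (simp add: adjoint_mat_def trace_def)

lemma trace_mult_hermitian_real:
  assumes "adjoint_mat A = A" and "adjoint_mat B = B"
  shows "trace (A ** B) \<in> \<real>"
proof -
  have "cnj (trace (A ** B)) = trace (adjoint_mat (A ** B))"
    by (simp add: trace_adjoint_mat)
  also have "\<dots> = trace (B ** A)"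
    by (simp add: adjoint_mat_mult assms)
  also have "\<dots> = trace (A ** B)"
    by (rule trace_mul_sym)
  finally show ?thesis
    by (simp add: Reals_cnj_iff)
qed

lemma trace_mult_hermitian_eq_Re:
  assumes "adjoint_mat A = A" and "adjoint_mat B = B"
  shows "trace (A ** B) = of_real (Re (trace (B ** A)))"
  using trace_mult_hermitian_real[OF assms(2,1)] trace_mul_sym[of A B] by simp

lemma trace_mult_mat_right: "trace (A ** mat t) = t * trace (A :: 'a::comm_semiring_1^'n^'n)"
  by (simp add: trace_def matrix_matrix_mult_def mat_def sum_distrib_left mult_ac if_distrib
      cong: if_cong)

lemma trace_mult_Phi:
  fixes A X :: "complex^'d^'d"
  shows "trace (A ** Phi X)
    = (trace X * trace A + trace (A ** X)) / (of_nat CARD('d) * (of_nat CARD('d) + 1))"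
proof -
  have "trace (A ** Phi X) = (1 / (real CARD('d) * (real CARD('d) + 1)))
      *\<^sub>R (trace X * trace A + trace (A ** X))"
    by (simp add: Phi_def matrix_scalar_ac scalar_matrix_assoc[symmetric] trace_scaleR
        matrix_add_ldistrib trace_add trace_mult_mat_right scaleR_add_right)
  then show ?thesis
    by (simp add: scaleR_conv_of_real)
qed

lemma trace_mult_sum_Phi_proj:
  fixes P :: "nat \<Rightarrow> complex^'d^'d" and w :: "nat \<Rightarrow> real"
  assumes "\<forall>i<n. rank_one_projector (P i)"
  shows "trace (A ** (\<Sum>i<n. w i *\<^sub>R Phi_proj (P i) X))
    = (\<Sum>i<n. of_real (w i) * trace (P i ** X) * trace (A ** P i))"
  unfolding trace_mult_sum_scaleR
  by (intro sum.cong refl)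
    (simp add: assms rank_one_projector_sandwich trace_mult_scale_right scaleR_conv_of_real)

lemma rank_one_decomposition_moments:
  fixes P :: "nat \<Rightarrow> complex^'d^'d" and w :: "nat \<Rightarrow> real"
  assumes proj: "\<forall>i<n. rank_one_projector (P i)"
    and decomp: "\<forall>X. Phi X = (\<Sum>i<n. w i *\<^sub>R Phi_proj (P i) X)"
    and j: "j < n"
  shows "(\<Sum>i<n. w i * Re (trace (P j ** P i))) = 1 / real CARD('d)"
    and "(\<Sum>i<n. w i * Re (trace (P j ** P i))^2)
      = 2 / (real CARD('d) * (real CARD('d) + 1))"
proof -
  define g where "g i = Re (trace (P j ** P i))" for i
  have g: "trace (P j ** P i) = of_real (g i)" and g_sym: "trace (P i ** P j) = of_real (g i)"
    if "i < n" for i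
    using trace_mult_hermitian_eq_Re[of "P i" "P j"] trace_mul_sym[of "P i" "P j"] proj j that
    by (simp_all add: g_def rank_one_projector_def)
  have trace_one: "trace (P i) = 1" if "i < n" for i
    using proj that trace_rank_one_projector by blast
  have "(of_nat CARD('d) + 1 :: complex) \<noteq> 0"
    by (metis of_nat_Suc of_nat_eq_0_iff nat.distinct(1) add.commute)
  then have card_nonzero: "(of_nat CARD('d) :: complex) * (of_nat CARD('d) + 1) \<noteq> 0"
    by simp
  have moment: "trace (P j ** Phi X) = (\<Sum>i<n. of_real (w i) * trace (P i ** X) * of_real (g i))"
    for X
    by (simp add: decomp trace_mult_sum_Phi_proj[OF proj] g)
  have "of_real (\<Sum>i<n. w i * g i) = trace (P j ** Phi (mat 1))"
    by (simp add: moment trace_mult_mat_right trace_one)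
  also have "\<dots> = of_real (1 / real CARD('d))"
    using trace_one[OF j] card_nonzero by (simp add: trace_mult_Phi trace_I field_simps)
  finally show "(\<Sum>i<n. w i * Re (trace (P j ** P i))) = 1 / real CARD('d)"
    unfolding g_def of_real_eq_iff .
  have "of_real (\<Sum>i<n. w i * (g i)^2) = trace (P j ** Phi (P j))"
    by (simp add: moment g_sym power2_eq_square mult.assoc)
  also have "\<dots> = of_real (2 / (real CARD('d) * (real CARD('d) + 1)))"
    using trace_one[OF j] proj j card_nonzero
    by (simp add: trace_mult_Phi rank_one_projector_def field_simps)
  finally show "(\<Sum>i<n. w i * Re (trace (P j ** P i))^2)
      = 2 / (real CARD('d) * (real CARD('d) + 1))"
    unfolding g_def of_real_eq_iff .
qed

lemma weighted_sum_square_deviation: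
  fixes w x :: "'i \<Rightarrow> 'a::comm_ring_1"
  shows "(\<Sum>i\<in>A. w i * (x i - c)^2)
    = (\<Sum>i\<in>A. w i * (x i)^2) - 2 * c * (\<Sum>i\<in>A. w i * x i) + c^2 * sum w A"
  by (simp add: power2_diff algebra_simps sum.distrib sum_subtractf sum_distrib_left
      sum_distrib_right)

lemma moment_conditions_force_equiangular:
  fixes d :: real and w :: "nat \<Rightarrow> real" and g :: "nat \<Rightarrow> nat \<Rightarrow> real"
  assumes d: "d > 0" and n_le: "real n \<le> d^2"
    and w_pos: "\<forall>i<n. w i > 0" and w_sum: "(\<Sum>i<n. w i) = 1"
    and diag: "\<forall>j<n. g j j = 1"
    and first: "\<forall>j<n. (\<Sum>i<n. w i * g j i) = 1 / d"
    and second: "\<forall>j<n. (\<Sum>i<n. w i * (g j i)^2) = 2 / (d * (d + 1))"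
  shows "real n = d^2 \<and> (\<forall>i<n. w i = 1 / d^2)
    \<and> (\<forall>j<n. \<forall>i<n. i \<noteq> j \<longrightarrow> g j i = 1 / (d + 1))"
proof -
  define c where "c = 1 / (d + 1)"
  have deviation: "(\<Sum>i<n. w i * (g j i - c)^2) = c^2" if "j < n" for j
  proof -
    have "(\<Sum>i<n. w i * (g j i - c)^2) = 2 / (d * (d + 1)) - 2 * c * (1 / d) + c^2"
      using first second w_sum that by (simp add: weighted_sum_square_deviation)
    also have "\<dots> = c^2"
      using d by (simp add: c_def field_simps power2_eq_square)
    finally show ?thesis .
  qed
  have diag_deviation: "g j j - c = d * c" if "j < n" for j
    using diag that d by (simp add: c_def field_simps)
  have w_le: "w j \<le> 1 / d^2" if j: "j < n" for j
  proof -
    have "w j * (d * c)^2 \<le> c^2"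
      using member_le_sum[of j "{..<n}" "\<lambda>i. w i * (g j i - c)^2"] w_pos j
      by (simp add: deviation diag_deviation less_imp_le)
    then have "(w j * d^2) * c^2 \<le> 1 * c^2"
      by (simp add: power_mult_distrib mult_ac)
    moreover have "c^2 > 0"
      using d by (simp add: c_def)
    ultimately have "w j * d^2 \<le> 1"
      by (simp only: mult_le_cancel_right_pos)
    then show ?thesis
      using d by (simp add: field_simps)
  qed
  have "1 \<le> (\<Sum>i<n. 1 / d^2)"
    using w_sum w_le sum_mono[of "{..<n}" w "\<lambda>_. 1 / d^2"] by simp
  then have n_eq: "real n = d^2"
    using n_le d by (simp add: field_simps)
  have w_eq: "w i = 1 / d^2" if "i < n" for i
    using sum_mono_inv[of w "{..<n}" "\<lambda>_. 1 / d^2"] w_sum w_le n_eq that d by simp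
  have off_diag: "g j i = c" if "j < n" "i < n" "i \<noteq> j" for i j
  proof -
    let ?f = "\<lambda>i. w i * (g j i - c)^2"
    have "?f j = c^2"
      using w_eq that d by (simp add: diag_deviation power2_eq_square)
    then have "sum ?f ({..<n} - {j}) = 0"
      using deviation[of j] sum.remove[of "{..<n}" j ?f] that by simp
    then have "?f i = 0"
      using sum_nonneg_eq_0_iff[of "{..<n} - {j}" ?f] w_pos that by (simp add: less_imp_le)
    then show ?thesis
      using w_pos that by force
  qed
  show ?thesis
    using n_eq w_eq off_diag c_def by blast
qed

theorem theorem5:
  fixes P :: "nat \<Rightarrow> complex^'d^'d" and w :: "nat \<Rightarrow> real" and n :: nat
  assumes "CARD('d) \<ge> 2"
    and "n \<le> CARD('d)^2"
    and "\<forall>i<n. rank_one_projector (P i)"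
    and "\<forall>i<n. w i > 0"
    and "(\<Sum>i<n. w i) = 1"
    and "\<forall>X. Phi X = (\<Sum>i<n. w i *\<^sub>R Phi_proj (P i) X)"
  shows "n = CARD('d)^2
    \<and> (\<forall>i<n. w i = 1 / real (CARD('d)^2))
    \<and> (\<forall>i<n. \<forall>j<n. i \<noteq> j \<longrightarrow> trace (P i ** P j) = 1 / (of_nat CARD('d) + 1))"
proof -
  define g where "g j i = Re (trace (P j ** P i))" for j i
  have trace_eq_g: "trace (P i ** P j) = of_real (g j i)" if "i < n" "j < n" for i j
    using trace_mult_hermitian_eq_Re[of "P i" "P j"] assms(3) that
    by (simp add: g_def rank_one_projector_def)
  have "\<forall>j<n. g j j = 1"
    using assms(3) by (simp add: g_def rank_one_projector_def trace_rank_one_projector)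
  moreover note rank_one_decomposition_moments[OF assms(3) assms(6)]
  moreover have "real n \<le> (real CARD('d))^2"
    using assms(2) by (metis of_nat_le_iff of_nat_power)
  ultimately have "real n = (real CARD('d))^2 \<and> (\<forall>i<n. w i = 1 / (real CARD('d))^2)
      \<and> (\<forall>j<n. \<forall>i<n. i \<noteq> j \<longrightarrow> g j i = 1 / (real CARD('d) + 1))"
    using moment_conditions_force_equiangular[of "real CARD('d)" n w g] assms(4,5)
    by (simp add: g_def)
  then show ?thesis
    using trace_eq_g by (simp flip: of_nat_power)
qed

end
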